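(* For every bounded measurable $G:[0,a^*]\to[0,\infty[$ with $G\ge4\pi$ a.e. and every $\beta>0$, $\kappa_1(G,\beta)<\beta$.
   Context: $\kappa_1(G,\beta):=\inf_{f\in\mathcal F_G\setminus\{0\}}\frac{\int_0^{a^*}\left(aG(a)|f'(a)|^2+\frac{\beta^2a}{G(a)}|f(a)|^2\right)da}{\int_0^{a^*}|f(a)|^2da}$, where $\mathcal F_G$ is the set of $f\in L^2(]0,a^*[)$ whose distributional derivative satisfies $\int_0^{a^*}|f'|^2aG\,da<\infty$. *)

theory Defs
  imports "HOL-Analysis.Analysis"
begin

definition test_fun :: "real \<Rightarrow> (real \<Rightarrow> real) \<Rightarrow> bool" where
  "test_fun A \<phi> \<longleftrightarrow>
     (\<forall>n x. ((deriv ^^ n) \<phi>) differentiable (at x)) \<and>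
     (\<exists>c d. 0 < c \<and> c \<le> d \<and> d < A \<and> (\<forall>x. x \<notin> {c..d} \<longrightarrow> \<phi> x = 0))"

definition has_weak_deriv :: "real \<Rightarrow> (real \<Rightarrow> complex) \<Rightarrow> (real \<Rightarrow> complex) \<Rightarrow> bool" where
  "has_weak_deriv A f g \<longleftrightarrow>
     (\<forall>c d. 0 < c \<longrightarrow> d < A \<longrightarrow> set_integrable lborel {c..d} g) \<and>
     (\<forall>\<phi>. test_fun A \<phi> \<longrightarrow>
        (LINT x:{0<..<A}|lborel. f x * complex_of_real (deriv \<phi> x))
          = - (LINT x:{0<..<A}|lborel. g x * complex_of_real (\<phi> x)))"

definition FG :: "real \<Rightarrow> (real \<Rightarrow> real) \<Rightarrow> ((real \<Rightarrow> complex) \<times> (real \<Rightarrow> complex)) set" where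
  "FG A G = {(f, g).
      set_borel_measurable lborel {0<..<A} f \<and>
      set_integrable lborel {0<..<A} (\<lambda>x. (cmod (f x))\<^sup>2) \<and>
      has_weak_deriv A f g \<and>
      set_integrable lborel {0<..<A} (\<lambda>x. (cmod (g x))\<^sup>2 * x * G x)}"

definition kappa1 :: "real \<Rightarrow> (real \<Rightarrow> real) \<Rightarrow> real \<Rightarrow> real" where
  "kappa1 A G \<beta> = Inf {
      (LINT x:{0<..<A}|lborel. x * G x * (cmod (g x))\<^sup>2 + \<beta>\<^sup>2 * x / G x * (cmod (f x))\<^sup>2)
        / (LINT x:{0<..<A}|lborel. (cmod (f x))\<^sup>2)
      | f g. (f, g) \<in> FG A G \<and> (LINT x:{0<..<A}|lborel. (cmod (f x))\<^sup>2) \<noteq> 0}"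

end

theory Submission
  imports Defs
begin

text \<open>
  Take the trial function f = exp (-\<beta> F) with F' = u, where u = 1/G wherever G \<ge> 4\<pi>, so
  that f' = -\<beta> u f. Then both terms of the Rayleigh numerator equal \<beta>^2 x f^2 / G (the
  equality case of AM-GM), and since (f^2)' = -2\<beta> u f^2, an integration by parts turns the
  numerator 2\<beta>^2 \<integral> x u f^2 into \<beta> (\<integral> f^2 - A f(A)^2), which is strictly less than \<beta> \<integral> f^2.

  As G is only measurable, F is merely the Lebesgue primitive of a bounded density and no
  chain rule is at hand. Instead, \<integral>[0,x] u F^n = F(x)^(n+1)/(n+1) is proved by Fubini, and
  \<integral>[0,s] u exp (-c F) = (1 - exp (-c F(s)))/c follows by integrating the exponential series
  termwise.
\<close>

lemma set_integrable_bounded: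
  fixes h :: "'a \<Rightarrow> 'b::{banach, second_countable_topology}"
  assumes "h \<in> borel_measurable M" "S \<in> sets M" "emeasure M S < \<infinity>"
    and "\<And>x. x \<in> S \<Longrightarrow> norm (h x) \<le> B"
  shows "set_integrable M S h"
  unfolding set_integrable_def
  by (rule integrableI_bounded_set_indicator[where B=B]) (use assms in auto)

lemma set_integrable_bounded_Icc:
  fixes h :: "real \<Rightarrow> 'b::{banach, second_countable_topology}"
  assumes "h \<in> borel_measurable lborel" "\<And>x. x \<in> {a..c} \<Longrightarrow> norm (h x) \<le> B"
  shows "set_integrable lborel {a..c} h"
  by (rule set_integrable_bounded[OF assms(1)]) (use assms(2) in \<open>auto simp: emeasure_lborel_Icc_eq\<close>)

lemma set_integrable_bounded_Ioo:
  fixes h :: "real \<Rightarrow> 'b::{banach, second_countable_topology}"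
  assumes "h \<in> borel_measurable lborel" "\<And>x. x \<in> {a<..<c} \<Longrightarrow> norm (h x) \<le> B"
  shows "set_integrable lborel {a<..<c} h"
proof (rule set_integrable_bounded[OF assms(1)])
  have "emeasure lborel {a<..<c} \<le> emeasure lborel {a..c}"
    by (rule emeasure_mono) auto
  then show "emeasure lborel {a<..<c} < \<infinity>"
    by (simp add: emeasure_lborel_Icc_eq le_less_trans)
qed (use assms(2) in auto)

lemma set_integral_Ioo_eq_Icc:
  fixes h :: "real \<Rightarrow> 'b::{banach, second_countable_topology}"
  shows "(LINT x:{a<..<c}|lborel. h x) = (LINT x:{a..c}|lborel. h x)"
  by (rule set_integral_discrete_difference[where X="{a, c}"]) auto

lemma set_integral_Ico_eq_Icc:
  fixes h :: "real \<Rightarrow> 'b::{banach, second_countable_topology}"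
  shows "(LINT x:{a..<c}|lborel. h x) = (LINT x:{a..c}|lborel. h x)"
  by (rule set_integral_discrete_difference[where X="{c}"]) auto

lemma set_integral_Icc_self:
  fixes h :: "real \<Rightarrow> 'b::{banach, second_countable_topology}"
  shows "(LINT x:{a..a}|lborel. h x) = 0"
  using set_integral_Ico_eq_Icc[of a a h] by (simp add: set_lebesgue_integral_def)

lemma sums_exp_antiderivative:
  fixes c y :: real
  assumes "c \<noteq> 0"
  shows "(\<lambda>n. (- c) ^ n / fact n * (y ^ Suc n / Suc n)) sums ((1 - exp (- c * y)) / c)"
proof -
  have "(\<lambda>n. (- c * y) ^ Suc n / fact (Suc n)) sums (exp (- c * y) - 1)"
    using exp_converges[of "- c * y"] sums_Suc_iff[of "\<lambda>n. (- c * y) ^ n /\<^sub>R fact n" "exp (- c * y) - 1"]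
    by (simp add: divide_inverse mult_ac)
  then have "(\<lambda>n. (- c * y) ^ Suc n / fact (Suc n) / (- c)) sums ((exp (- c * y) - 1) / (- c))"
    by (rule sums_divide)
  moreover have "(- c * y) ^ Suc n / fact (Suc n) / (- c) = (- c) ^ n / fact n * (y ^ Suc n / Suc n)" for n
  proof -
    have "(- c * y) ^ Suc n / fact (Suc n) / (- c)
        = ((- c) * (- c) ^ n * y ^ Suc n) / (real (Suc n) * fact n) / (- c)"
      by (simp only: power_mult_distrib power_Suc fact_Suc of_nat_mult mult_ac)
    also have "\<dots> = (- c) ^ n * y ^ Suc n / (real (Suc n) * fact n)"
      using assms by (simp add: mult.assoc)
    finally show ?thesis
      by simp
  qed
  moreover have "(exp (- c * y) - 1) / (- c) = (1 - exp (- c * y)) / c"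
    using assms by (simp add: field_simps)
  ultimately show ?thesis
    by (simp only:)
qed

lemma borel_measurable_indicator_atLeastAtMost_pair:
  "(\<lambda>(s::real, t::real). indicator {0..s} t :: real) \<in> borel_measurable (lborel \<Otimes>\<^sub>M lborel)"
  unfolding indicator_def by (simp add: case_prod_beta) measurable

lemma borel_measurable_indicator_atLeastLessThan_pair:
  "(\<lambda>(s::real, t::real). indicator {0..<t} s :: real) \<in> borel_measurable (lborel \<Otimes>\<^sub>M lborel)"
  unfolding indicator_def by (simp add: case_prod_beta) measurable

lemma integrable_lborel_pair_bounded_square:
  fixes K :: "real \<times> real \<Rightarrow> real"
  assumes [measurable]: "K \<in> borel_measurable (lborel \<Otimes>\<^sub>M lborel)"
    and "\<And>z. \<bar>K z\<bar> \<le> C" and "\<And>z. z \<notin> {0..x} \<times> {0..x} \<Longrightarrow> K z = 0"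
  shows "integrable (lborel \<Otimes>\<^sub>M lborel) K"
proof (rule integrableI_bounded_set[where A="{0..x} \<times> {0..x}" and B=C])
  show "{0..x} \<times> {0..x} \<in> sets (lborel \<Otimes>\<^sub>M lborel)"
    by (rule pair_measureI) auto
  show "emeasure (lborel \<Otimes>\<^sub>M lborel) ({0..x} \<times> {0..x}) < \<infinity>"
    by (subst lborel.emeasure_pair_measure_Times) (auto simp: ennreal_mult_less_top emeasure_lborel_Icc_eq)
qed (use assms in \<open>auto intro!: AE_I2\<close>)

text \<open>Fubini on the square [0,x] \<times> [0,x], split along its diagonal.\<close>

lemma set_integral_by_parts_primitives:
  fixes p q :: "real \<Rightarrow> real"
  assumes [measurable]: "p \<in> borel_measurable lborel" "q \<in> borel_measurable lborel"
    and p_bound: "\<And>s. \<bar>p s\<bar> \<le> B" and q_bound: "\<And>t. \<bar>q t\<bar> \<le> B"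
  shows "(LINT s:{0..x}|lborel. p s * (LINT t:{0..s}|lborel. q t))
       + (LINT t:{0..x}|lborel. q t * (LINT s:{0..t}|lborel. p s))
       = (LINT s:{0..x}|lborel. p s) * (LINT t:{0..x}|lborel. q t)"
proof -
  let ?M = "lborel \<Otimes>\<^sub>M lborel :: (real \<times> real) measure"
  define K1 where "K1 = (\<lambda>(s, t). indicator {0..x} s * p s * (indicator {0..s} t * q t) :: real)"
  define K2 where "K2 = (\<lambda>(s, t). indicator {0..x} t * q t * (indicator {0..<t} s * p s) :: real)"
  define K where "K = (\<lambda>(s, t). indicator {0..x} s * p s * (indicator {0..x} t * q t) :: real)"
  have K1_measurable [measurable]: "K1 \<in> borel_measurable ?M"
    using borel_measurable_indicator_atLeastAtMost_pair unfolding K1_def case_prod_beta by measurable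
  have K2_measurable [measurable]: "K2 \<in> borel_measurable ?M"
    using borel_measurable_indicator_atLeastLessThan_pair unfolding K2_def case_prod_beta by measurable
  have K_measurable [measurable]: "K \<in> borel_measurable ?M"
    unfolding K_def case_prod_beta by measurable
  have pq: "\<bar>p s\<bar> * \<bar>q t\<bar> \<le> B * B" "\<bar>q t\<bar> * \<bar>p s\<bar> \<le> B * B" for s t
    using p_bound[of s] q_bound[of t] by (simp_all add: mult_mono')
  have "integrable ?M K1"
    by (rule integrable_lborel_pair_bounded_square[OF K1_measurable, where C="B * B" and x=x])
       (use pq in \<open>auto simp: K1_def abs_mult split: split_indicator split_indicator_asm\<close>)
  moreover have "integrable ?M K2"
    by (rule integrable_lborel_pair_bounded_square[OF K2_measurable, where C="B * B" and x=x])
       (use pq in \<open>auto simp: K2_def abs_mult split: split_indicator split_indicator_asm\<close>)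
  moreover have "integrable ?M K"
    by (rule integrable_lborel_pair_bounded_square[OF K_measurable, where C="B * B" and x=x])
       (use pq in \<open>auto simp: K_def abs_mult split: split_indicator split_indicator_asm\<close>)
  moreover have "K = (\<lambda>z. K1 z + K2 z)"
    by (auto simp: K_def K1_def K2_def fun_eq_iff split: split_indicator)
  ultimately have "integral\<^sup>L ?M K = integral\<^sup>L ?M K1 + integral\<^sup>L ?M K2"
    by simp
  moreover have "integral\<^sup>L ?M K1 = (LINT s:{0..x}|lborel. p s * (LINT t:{0..s}|lborel. q t))"
    using lborel_pair.integral_fst'[OF \<open>integrable ?M K1\<close>]
    by (simp add: K1_def set_lebesgue_integral_def mult.assoc)
  moreover have "integral\<^sup>L ?M K2 = (LINT t:{0..x}|lborel. q t * (LINT s:{0..<t}|lborel. p s))"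
    using lborel_pair.integral_snd[of "\<lambda>s t. K2 (s, t)"] \<open>integrable ?M K2\<close>
    by (simp add: K2_def set_lebesgue_integral_def mult.assoc)
  moreover have "integral\<^sup>L ?M K = (LINT s:{0..x}|lborel. p s) * (LINT t:{0..x}|lborel. q t)"
    using lborel_pair.integral_fst'[OF \<open>integrable ?M K\<close>]
    by (simp add: K_def set_lebesgue_integral_def)
  ultimately show ?thesis
    by (simp add: set_integral_Ico_eq_Icc)
qed

lemma test_fun_has_real_derivative:
  assumes "test_fun A \<phi>"
  shows "(\<phi> has_real_derivative deriv \<phi> x) (at x)"
  using assms unfolding test_fun_def
  by (metis DERIV_deriv_iff_real_differentiable funpow_0)

lemma test_fun_continuous_deriv:
  assumes "test_fun A \<phi>"
  shows "continuous_on UNIV (deriv \<phi>)"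
proof -
  have "((deriv ^^ Suc 0) \<phi>) differentiable (at x)" for x
    using assms unfolding test_fun_def by blast
  then show ?thesis
    by (auto intro!: continuous_at_imp_continuous_on differentiable_imp_continuous_within)
qed

lemma test_fun_outside:
  assumes "test_fun A \<phi>" and "x \<le> 0 \<or> A \<le> x"
  shows "\<phi> x = 0"
  using assms unfolding test_fun_def by force

lemma set_integral_deriv_test_fun:
  assumes "test_fun A \<phi>" and "0 \<le> s"
  shows "(LINT t:{0..s}|lborel. deriv \<phi> t) = \<phi> s"
proof -
  have "(LINT t:{0..s}|lborel. deriv \<phi> t) = \<phi> s - \<phi> 0"
    unfolding set_lebesgue_integral_def
    by (rule integral_FTC_atLeastAtMost)
       (use assms test_fun_has_real_derivative[OF assms(1)] test_fun_continuous_deriv[OF assms(1)] in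
        \<open>auto intro: has_field_derivative_at_within continuous_on_subset
           simp: has_real_derivative_iff_has_vector_derivative[symmetric]\<close>)
  then show ?thesis
    using test_fun_outside[OF assms(1), of 0] by simp
qed

lemma borel_measurable_deriv_test_fun:
  "test_fun A \<phi> \<Longrightarrow> deriv \<phi> \<in> borel_measurable lborel"
  using borel_measurable_continuous_onI[OF test_fun_continuous_deriv] by simp

lemma test_fun_deriv_bounded:
  assumes "test_fun A \<phi>"
  obtains C where "\<And>x. x \<in> {a..c} \<Longrightarrow> \<bar>deriv \<phi> x\<bar> \<le> C"
proof -
  have "compact (deriv \<phi> ` {a..c})"
    using test_fun_continuous_deriv[OF assms] by (auto intro: compact_continuous_image continuous_on_subset)
  then show ?thesis
    using that by (metis bounded_iff compact_imp_bounded image_eqI real_norm_def)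
qed

lemma set_integral_deriv_test_fun_eq_0:
  assumes "test_fun A \<phi>"
  shows "(LINT s:{0..A}|lborel. deriv \<phi> s) = 0"
  using set_integral_deriv_test_fun[OF assms, of A] test_fun_outside[OF assms, of A]
  by (cases "0 \<le> A") (auto simp: set_lebesgue_integral_def)

lemma set_integral_by_parts_test_fun:
  fixes f g :: "real \<Rightarrow> real"
  assumes [measurable]: "f \<in> borel_measurable lborel" "g \<in> borel_measurable lborel"
    and f_bound: "\<And>x. \<bar>f x\<bar> \<le> B" and g_bound: "\<And>x. \<bar>g x\<bar> \<le> B"
    and primitive_g: "\<And>s. s \<in> {0..A} \<Longrightarrow> (LINT t:{0..s}|lborel. g t) = f s - f 0"
    and \<phi>: "test_fun A \<phi>"
  shows "(LINT s:{0..A}|lborel. f s * deriv \<phi> s) = - (LINT t:{0..A}|lborel. g t * \<phi> t)"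
proof -
  have [measurable]: "deriv \<phi> \<in> borel_measurable lborel"
    using borel_measurable_deriv_test_fun[OF \<phi>] .
  obtain C where C: "\<And>x. x \<in> {0..A} \<Longrightarrow> \<bar>deriv \<phi> x\<bar> \<le> C"
    using test_fun_deriv_bounded[OF \<phi>, of 0 A] by blast
  define p where "p s = indicator {0..A} s * deriv \<phi> s" for s
  have [measurable]: "p \<in> borel_measurable lborel"
    unfolding p_def by measurable
  have "\<bar>p s\<bar> \<le> max B C" "\<bar>g s\<bar> \<le> max B C" for s
    using C[of s] g_bound[of s] by (auto simp: p_def indicator_def)
  from set_integral_by_parts_primitives[where p=p and q=g and x=A, OF _ _ this]
  have "(LINT s:{0..A}|lborel. p s * (LINT t:{0..s}|lborel. g t))
      + (LINT t:{0..A}|lborel. g t * (LINT s:{0..t}|lborel. p s))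
      = (LINT s:{0..A}|lborel. p s) * (LINT t:{0..A}|lborel. g t)"
    by measurable
  moreover have "(LINT s:{0..A}|lborel. p s) = (LINT s:{0..A}|lborel. deriv \<phi> s)"
    by (rule set_lebesgue_integral_cong) (auto simp: p_def)
  moreover have "(LINT s:{0..A}|lborel. p s * (LINT t:{0..s}|lborel. g t))
      = (LINT s:{0..A}|lborel. deriv \<phi> s * (f s - f 0))"
    by (rule set_lebesgue_integral_cong) (auto simp: p_def primitive_g)
  moreover have "(LINT t:{0..s}|lborel. p t) = \<phi> s" if "s \<in> {0..A}" for s
  proof -
    have "(LINT t:{0..s}|lborel. p t) = (LINT t:{0..s}|lborel. deriv \<phi> t)"
      by (rule set_lebesgue_integral_cong) (use that in \<open>auto simp: p_def\<close>)
    then show ?thesis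
      using set_integral_deriv_test_fun[OF \<phi>, of s] that by simp
  qed
  then have "(LINT t:{0..A}|lborel. g t * (LINT s:{0..t}|lborel. p s)) = (LINT t:{0..A}|lborel. g t * \<phi> t)"
    by (intro set_lebesgue_integral_cong) auto
  moreover have "(LINT s:{0..A}|lborel. deriv \<phi> s * (f s - f 0))
      = (LINT s:{0..A}|lborel. f s * deriv \<phi> s) - f 0 * (LINT s:{0..A}|lborel. deriv \<phi> s)"
  proof -
    have "\<bar>deriv \<phi> s * f t\<bar> \<le> C * B" if "s \<in> {0..A}" for s t
      using C[OF that] f_bound[of t] by (simp add: abs_mult mult_mono')
    then have "set_integrable lborel {0..A} (\<lambda>s. deriv \<phi> s * f s)"
      and "set_integrable lborel {0..A} (\<lambda>s. deriv \<phi> s * f 0)"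
      by (auto intro!: set_integrable_bounded_Icc[where B="C * B"])
    then show ?thesis
      by (simp add: right_diff_distrib mult.commute)
  qed
  ultimately show ?thesis
    using set_integral_deriv_test_fun_eq_0[OF \<phi>] by simp
qed

lemma has_weak_deriv_of_real:
  fixes f g :: "real \<Rightarrow> real"
  assumes [measurable]: "f \<in> borel_measurable lborel" "g \<in> borel_measurable lborel"
    and "\<And>x. \<bar>f x\<bar> \<le> B" and g_bound: "\<And>x. \<bar>g x\<bar> \<le> B"
    and "\<And>s. s \<in> {0..A} \<Longrightarrow> (LINT t:{0..s}|lborel. g t) = f s - f 0"
  shows "has_weak_deriv A (\<lambda>x. complex_of_real (f x)) (\<lambda>x. complex_of_real (g x))"
  unfolding has_weak_deriv_def
proof (intro conjI allI impI)
  fix c d :: real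
  show "set_integrable lborel {c..d} (\<lambda>x. complex_of_real (g x))"
    by (rule set_integrable_bounded_Icc[where B=B]) (use g_bound in auto)
next
  fix \<phi> assume "test_fun A \<phi>"
  then have "(LINT x:{0<..<A}|lborel. f x * deriv \<phi> x) = - (LINT x:{0<..<A}|lborel. g x * \<phi> x)"
    using set_integral_by_parts_test_fun[OF assms] by (simp add: set_integral_Ioo_eq_Icc)
  then show "(LINT x:{0<..<A}|lborel. complex_of_real (f x) * complex_of_real (deriv \<phi> x))
      = - (LINT x:{0<..<A}|lborel. complex_of_real (g x) * complex_of_real (\<phi> x))"
    by (simp add: set_integral_complex_of_real flip: of_real_mult)
qed

lemma of_real_pair_in_FG:
  fixes f g G :: "real \<Rightarrow> real"
  assumes [measurable]: "f \<in> borel_measurable lborel" "g \<in> borel_measurable lborel"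
    and f_bound: "\<And>x. \<bar>f x\<bar> \<le> B" and g_bound: "\<And>x. \<bar>g x\<bar> \<le> B"
    and "has_weak_deriv A (\<lambda>x. complex_of_real (f x)) (\<lambda>x. complex_of_real (g x))"
    and G_measurable: "set_borel_measurable lborel {0..A} G"
    and G_bounds: "\<And>x. x \<in> {0..A} \<Longrightarrow> 0 \<le> G x \<and> G x \<le> M"
  shows "((\<lambda>x. complex_of_real (f x)), (\<lambda>x. complex_of_real (g x))) \<in> FG A G"
proof -
  have square_le: "r\<^sup>2 \<le> B\<^sup>2" if "\<bar>r\<bar> \<le> B" for r
    using that by (metis abs_ge_zero power2_abs power_mono)
  define G' where "G' x = indicator {0..A} x * G x" for x
  have [measurable]: "G' \<in> borel_measurable lborel"
    using G_measurable unfolding G'_def set_borel_measurable_def by simp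
  have "\<bar>(g x)\<^sup>2 * x * G' x\<bar> \<le> B\<^sup>2 * A * M" if "x \<in> {0<..<A}" for x
    using square_le[OF g_bound[of x]] that G_bounds[of x] by (auto simp: G'_def abs_mult intro!: mult_mono)
  then have "set_integrable lborel {0<..<A} (\<lambda>x. (g x)\<^sup>2 * x * G' x)"
    by (intro set_integrable_bounded_Ioo[where B="B\<^sup>2 * A * M"]) auto
  moreover have "set_integrable lborel {0<..<A} (\<lambda>x. (f x)\<^sup>2)"
    using square_le[OF f_bound] by (intro set_integrable_bounded_Ioo[where B="B\<^sup>2"]) auto
  moreover have "(\<lambda>x. indicator {0<..<A} x *\<^sub>R ((g x)\<^sup>2 * x * G' x))
      = (\<lambda>x. indicator {0<..<A} x *\<^sub>R ((g x)\<^sup>2 * x * G x))"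
    by (auto simp: G'_def fun_eq_iff split: split_indicator)
  ultimately show ?thesis
    using assms(5) unfolding FG_def set_integrable_def set_borel_measurable_def by simp
qed

lemma Rayleigh_integrand_balanced:
  fixes G w x \<beta> e :: real
  assumes "G * w = 1"
  shows "x * G * (- \<beta> * w * e)\<^sup>2 + \<beta>\<^sup>2 * x / G * e\<^sup>2 = 2 * \<beta>\<^sup>2 * (w * e\<^sup>2 * x)"
proof -
  have "G \<noteq> 0" and w: "w = 1 / G"
    using assms by (auto simp: eq_divide_eq mult.commute)
  then show ?thesis
    unfolding w by (simp add: field_simps power2_eq_square)
qed

lemma kappa1_le_Rayleigh_quotient:
  fixes f g :: "real \<Rightarrow> real"
  assumes "((\<lambda>x. complex_of_real (f x)), (\<lambda>x. complex_of_real (g x))) \<in> FG A G"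
    and G_nonneg: "\<And>x. x \<in> {0<..<A} \<Longrightarrow> 0 \<le> G x"
    and "(LINT x:{0<..<A}|lborel. (f x)\<^sup>2) \<noteq> 0"
  shows "kappa1 A G \<beta>
    \<le> (LINT x:{0<..<A}|lborel. x * G x * (g x)\<^sup>2 + \<beta>\<^sup>2 * x / G x * (f x)\<^sup>2)
       / (LINT x:{0<..<A}|lborel. (f x)\<^sup>2)"
  unfolding kappa1_def
proof (rule cInf_lower)
  show "bdd_below {(LINT x:{0<..<A}|lborel. x * G x * (cmod (g x))\<^sup>2 + \<beta>\<^sup>2 * x / G x * (cmod (f x))\<^sup>2)
        / (LINT x:{0<..<A}|lborel. (cmod (f x))\<^sup>2)
      | f g. (f, g) \<in> FG A G \<and> (LINT x:{0<..<A}|lborel. (cmod (f x))\<^sup>2) \<noteq> 0}"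
    by (rule bdd_belowI[where m=0])
       (auto intro!: divide_nonneg_nonneg integral_nonneg_AE
         simp: set_lebesgue_integral_def indicator_def G_nonneg)
  have "(cmod (complex_of_real r))\<^sup>2 = r\<^sup>2" for r
    by simp
  then show "(LINT x:{0<..<A}|lborel. x * G x * (g x)\<^sup>2 + \<beta>\<^sup>2 * x / G x * (f x)\<^sup>2)
       / (LINT x:{0<..<A}|lborel. (f x)\<^sup>2)
    \<in> {(LINT x:{0<..<A}|lborel. x * G x * (cmod (g x))\<^sup>2 + \<beta>\<^sup>2 * x / G x * (cmod (f x))\<^sup>2)
        / (LINT x:{0<..<A}|lborel. (cmod (f x))\<^sup>2)
      | f g. (f, g) \<in> FG A G \<and> (LINT x:{0<..<A}|lborel. (cmod (f x))\<^sup>2) \<noteq> 0}"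
    using assms(1,3) by force
qed

locale bounded_density =
  fixes u :: "real \<Rightarrow> real" and A b :: real
  assumes borel_measurable_density [measurable]: "u \<in> borel_measurable lborel"
    and density_nonneg: "\<And>x. 0 \<le> u x"
    and density_le: "\<And>x. u x \<le> b"
    and density_outside: "\<And>x. x \<notin> {0..A} \<Longrightarrow> u x = 0"
    and A_nonneg: "0 \<le> A"
begin

definition primitive :: "real \<Rightarrow> real" where
  "primitive x = (LINT t:{0..x}|lborel. u t)"

lemma bound_nonneg: "0 \<le> b"
  using density_nonneg[of 0] density_le[of 0] by linarith

lemma set_integrable_density: "set_integrable lborel {a..c} u"
  by (rule set_integrable_bounded_Icc[where B=b]) (use density_nonneg density_le in auto)

lemma primitive_0 [simp]: "primitive 0 = 0"
  unfolding primitive_def by (rule set_integral_Icc_self)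

lemma primitive_nonneg: "0 \<le> primitive x"
  unfolding primitive_def set_lebesgue_integral_def
  by (rule integral_nonneg_AE) (auto simp: density_nonneg)

lemma primitive_mono: "mono primitive"
proof
  fix x y :: real assume "x \<le> y"
  then show "primitive x \<le> primitive y"
    using set_integrable_density[of 0 x] set_integrable_density[of 0 y] density_nonneg
    unfolding primitive_def set_lebesgue_integral_def set_integrable_def
    by (intro integral_mono) (auto split: split_indicator)
qed

lemma borel_measurable_primitive [measurable]: "primitive \<in> borel_measurable lborel"
  using primitive_mono borel_measurable_mono by simp

lemma primitive_le: "primitive x \<le> b * A"
proof -
  have "primitive x = (LINT t|lborel. indicator {0..x} t * u t)"
    unfolding primitive_def set_lebesgue_integral_def by simp
  also have "\<dots> \<le> (LINT t|lborel. indicator {0..A} t * b)"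
  proof (rule integral_mono)
    show "integrable lborel (\<lambda>t. indicator {0..A} t * b)"
      using set_integrable_bounded_Icc[of "\<lambda>_. b" 0 A b] bound_nonneg
      by (auto simp: set_integrable_def)
    show "integrable lborel (\<lambda>t. indicator {0..x} t * u t)"
      using set_integrable_density[of 0 x] by (auto simp: set_integrable_def)
    show "indicator {0..x} t * u t \<le> indicator {0..A} t * b" for t
      using density_outside[of t] density_nonneg[of t] density_le[of t] bound_nonneg
      by (auto split: split_indicator)
  qed
  also have "\<dots> = b * A"
    using set_integral_const[of "{0..A}" lborel b] A_nonneg
    by (simp add: set_lebesgue_integral_def emeasure_lborel_Icc_eq)
  finally show ?thesis .
qed

lemma density_times_primitive_power_le: "u t * primitive t ^ n \<le> b * (b * A) ^ n"
  by (intro mult_mono power_mono)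
     (use density_nonneg density_le primitive_nonneg primitive_le bound_nonneg in auto)

lemma set_integral_density_times_primitive_power:
  "(LINT t:{0..x}|lborel. u t * primitive t ^ n) = primitive x ^ Suc n / Suc n"
proof (induction n arbitrary: x)
  case 0
  then show ?case by (simp add: primitive_def)
next
  case (Suc n)
  define q where "q t = real (Suc n) * (u t * primitive t ^ n)" for t
  define B where "B = b + real (Suc n) * (b * (b * A) ^ n)"
  have [measurable]: "q \<in> borel_measurable lborel"
    unfolding q_def by measurable
  have primitive_q: "(LINT t:{0..s}|lborel. q t) = primitive s ^ Suc n" for s
    unfolding q_def using Suc.IH[of s] by simp
  have "\<bar>u t\<bar> \<le> B" "\<bar>q t\<bar> \<le> B" for t
  proof -
    have "0 \<le> q t" "q t \<le> real (Suc n) * (b * (b * A) ^ n)"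
      using density_nonneg[of t] primitive_nonneg[of t] density_times_primitive_power_le[of t n]
      unfolding q_def by (auto intro: mult_left_mono)
    moreover have "0 \<le> real (Suc n) * (b * (b * A) ^ n)"
      using bound_nonneg A_nonneg by simp
    ultimately show "\<bar>u t\<bar> \<le> B" "\<bar>q t\<bar> \<le> B"
      using density_nonneg[of t] density_le[of t] bound_nonneg unfolding B_def by auto
  qed
  from set_integral_by_parts_primitives[where p=u and q=q and x=x, OF _ _ this]
  have "(LINT s:{0..x}|lborel. u s * primitive s ^ Suc n) + (LINT t:{0..x}|lborel. q t * primitive t)
      = primitive x * primitive x ^ Suc n"
    by (simp only: primitive_q primitive_def[symmetric] borel_measurable_density) measurable
  moreover have "(LINT t:{0..x}|lborel. q t * primitive t)
      = real (Suc n) * (LINT t:{0..x}|lborel. u t * primitive t ^ Suc n)"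
    by (simp add: q_def mult_ac flip: set_integral_mult_right)
  ultimately have "real (Suc (Suc n)) * (LINT s:{0..x}|lborel. u s * primitive s ^ Suc n)
      = primitive x ^ Suc (Suc n)"
    by (simp add: algebra_simps)
  then show ?case
    by (simp add: field_simps del: of_nat_Suc)
qed

lemma set_integral_density_times_exp_primitive:
  assumes "c \<noteq> 0"
  shows "(LINT t:{0..x}|lborel. u t * exp (- c * primitive t)) = (1 - exp (- c * primitive x)) / c"
proof -
  define a where "a n = (- c) ^ n / fact n" for n
  define h where "h n t = a n * (indicator {0..x} t * (u t * primitive t ^ n))" for n t
  have [measurable]: "h n \<in> borel_measurable lborel" for n
    unfolding h_def by measurable
  have abs_a: "\<bar>a n\<bar> = (- (- \<bar>c\<bar>)) ^ n / fact n" for n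
    by (simp add: a_def power_abs)
  have norm_h: "norm (h n t) = \<bar>a n\<bar> * (indicator {0..x} t * (u t * primitive t ^ n))" for n t
    using density_nonneg[of t] primitive_nonneg[of t]
    by (simp add: h_def abs_mult split: split_indicator)
  have integral_h: "integral\<^sup>L lborel (h n) = a n * (primitive x ^ Suc n / Suc n)"
    and integral_norm_h: "(\<integral>t. norm (h n t) \<partial>lborel) = \<bar>a n\<bar> * (primitive x ^ Suc n / Suc n)" for n
    using set_integral_density_times_primitive_power[of x n]
    by (simp_all only: norm_h) (simp_all add: h_def[abs_def] set_lebesgue_integral_def)
  have "integrable lborel (h n)" for n
  proof -
    have "set_integrable lborel {0..x} (\<lambda>t. u t * primitive t ^ n)"
      by (rule set_integrable_bounded_Icc[where B="b * (b * A) ^ n"])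
         (use density_times_primitive_power_le density_nonneg primitive_nonneg in auto)
    then show ?thesis
      by (simp add: h_def[abs_def] set_integrable_def)
  qed
  moreover have "AE t in lborel. summable (\<lambda>n. norm (h n t))"
  proof (rule AE_I2)
    fix t
    have "summable (\<lambda>n. (\<bar>c\<bar> * \<bar>primitive t\<bar>) ^ n / fact n * \<bar>indicator {0..x} t * u t\<bar>)"
      using summable_exp[of "\<bar>c\<bar> * \<bar>primitive t\<bar>"]
      by (intro summable_mult2) (simp add: divide_inverse mult.commute)
    moreover have "norm (h n t) = (\<bar>c\<bar> * \<bar>primitive t\<bar>) ^ n / fact n * \<bar>indicator {0..x} t * u t\<bar>" for n
      by (simp add: h_def a_def abs_mult power_abs power_mult_distrib)
    ultimately show "summable (\<lambda>n. norm (h n t))"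
      by simp
  qed
  moreover have "summable (\<lambda>n. \<integral>t. norm (h n t) \<partial>lborel)"
    unfolding integral_norm_h abs_a
    using sums_exp_antiderivative[of "- \<bar>c\<bar>" "primitive x"] assms by (auto simp: sums_iff)
  ultimately have "(\<lambda>n. integral\<^sup>L lborel (h n)) sums (\<integral>t. (\<Sum>n. h n t) \<partial>lborel)"
    by (intro sums_integral)
  moreover have "(\<Sum>n. h n t) = indicator {0..x} t * (u t * exp (- c * primitive t))" for t
  proof -
    have "(\<lambda>n. (indicator {0..x} t * u t) * ((- c * primitive t) ^ n /\<^sub>R fact n))
        sums ((indicator {0..x} t * u t) * exp (- c * primitive t))"
      by (intro sums_mult exp_converges)
    moreover have "(indicator {0..x} t * u t) * ((- c * primitive t) ^ n /\<^sub>R fact n) = h n t" for n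
      using power_mult_distrib[of "- c" "primitive t" n]
      by (simp add: h_def a_def divide_inverse mult_ac)
    ultimately show ?thesis
      by (simp add: sums_iff mult_ac)
  qed
  moreover have "(\<lambda>n. integral\<^sup>L lborel (h n)) sums ((1 - exp (- c * primitive x)) / c)"
    unfolding integral_h a_def using sums_exp_antiderivative[OF assms] .
  ultimately show ?thesis
    by (simp add: set_lebesgue_integral_def sums_unique2)
qed

lemma exp_primitive_le_1: "0 \<le> c \<Longrightarrow> exp (- c * primitive x) \<le> 1"
  using primitive_nonneg[of x] by simp

lemma abs_density_times_exp_primitive_le:
  assumes "0 \<le> c"
  shows "\<bar>u x * exp (- c * primitive x)\<bar> \<le> b"
proof -
  have "u x * exp (- c * primitive x) \<le> b * 1"
    using density_le[of x] density_nonneg[of x] exp_primitive_le_1[OF assms, of x] bound_nonneg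
    by (intro mult_mono) auto
  then show ?thesis
    using density_nonneg[of x] by simp
qed

lemma abs_deriv_exp_primitive_le:
  assumes "0 \<le> c"
  shows "\<bar>- c * u x * exp (- c * primitive x)\<bar> \<le> max 1 (c * b)"
  using mult_left_mono[OF abs_density_times_exp_primitive_le[OF assms, of x] assms] assms
  by (simp add: abs_mult le_max_iff_disj mult.assoc)

lemma has_weak_deriv_exp_primitive:
  assumes "0 < c"
  shows "has_weak_deriv A (\<lambda>x. complex_of_real (exp (- c * primitive x)))
    (\<lambda>x. complex_of_real (- c * u x * exp (- c * primitive x)))"
proof (rule has_weak_deriv_of_real[where B="max 1 (c * b)"])
  fix x
  show "\<bar>exp (- c * primitive x)\<bar> \<le> max 1 (c * b)"
    using exp_primitive_le_1[of c x] assms by (simp add: le_max_iff_disj)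
  show "\<bar>- c * u x * exp (- c * primitive x)\<bar> \<le> max 1 (c * b)"
    using abs_deriv_exp_primitive_le assms by simp
next
  fix s
  show "(LINT t:{0..s}|lborel. - c * u t * exp (- c * primitive t))
      = exp (- c * primitive s) - exp (- c * primitive 0)"
  proof -
    have "(LINT t:{0..s}|lborel. - c * u t * exp (- c * primitive t))
        = - c * (LINT t:{0..s}|lborel. u t * exp (- c * primitive t))"
      by (simp only: mult.assoc set_integral_mult_right)
    then show ?thesis
      using set_integral_density_times_exp_primitive[of c s] assms by simp
  qed
qed measurable

lemma set_integral_exp_primitive_by_parts:
  assumes "0 < c"
  shows "c * (LINT t:{0..A}|lborel. u t * exp (- c * primitive t) * t)
    = (LINT t:{0..A}|lborel. exp (- c * primitive t)) - A * exp (- c * primitive A)"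
proof -
  define e where "e = (\<lambda>t. exp (- c * primitive t))"
  have [measurable]: "e \<in> borel_measurable lborel"
    unfolding e_def by measurable
  have integral_ue: "(LINT t:{0..s}|lborel. u t * e t) = (1 - e s) / c" for s
    using set_integral_density_times_exp_primitive[of c s] assms by (simp add: e_def)
  have length: "(LINT s:{0..t}|lborel. 1) = t" if "0 \<le> t" for t :: real
    using that by (simp add: set_integral_const)
  have bounds: "\<bar>1\<bar> \<le> max 1 b" "\<bar>u t * e t\<bar> \<le> max 1 b" for t :: real
    using abs_density_times_exp_primitive_le[of c t] assms by (auto simp: e_def le_max_iff_disj)
  have "(LINT s:{0..A}|lborel. 1 * (LINT t:{0..s}|lborel. u t * e t))
      + (LINT t:{0..A}|lborel. u t * e t * (LINT s:{0..t}|lborel. 1))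
      = (LINT s:{0..A}|lborel. 1) * (LINT t:{0..A}|lborel. u t * e t)"
    by (rule set_integral_by_parts_primitives[OF _ _ bounds]) measurable
  moreover have "(LINT t:{0..A}|lborel. u t * e t * (LINT s:{0..t}|lborel. 1))
      = (LINT t:{0..A}|lborel. u t * e t * t)"
    by (rule set_lebesgue_integral_cong) (auto simp: length)
  ultimately have by_parts: "(LINT s:{0..A}|lborel. 1 - e s) / c + (LINT t:{0..A}|lborel. u t * e t * t)
      = A * (1 - e A) / c"
    using A_nonneg by (simp add: integral_ue length)
  have "set_integrable lborel {0..A} e"
    by (rule set_integrable_bounded_Icc[where B=1]) (use exp_primitive_le_1 assms in \<open>auto simp: e_def\<close>)
  moreover have "set_integrable lborel {0..A} (\<lambda>_. 1 :: real)"
    by (rule set_integrable_bounded_Icc[where B=1]) auto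
  ultimately have "(LINT s:{0..A}|lborel. 1 - e s) = A - (LINT s:{0..A}|lborel. e s)"
    using A_nonneg by (simp add: set_integral_diff length)
  with by_parts have "(A - (LINT s:{0..A}|lborel. e s)) / c + (LINT t:{0..A}|lborel. u t * e t * t)
      = A * (1 - e A) / c"
    by (simp only:)
  moreover have "c * J = X - A * E" if "(A - X) / c + J = A * (1 - E) / c" for J X E :: real
    using that assms by (simp add: field_simps)
  ultimately have "c * (LINT t:{0..A}|lborel. u t * e t * t) = (LINT t:{0..A}|lborel. e t) - A * e A"
    by blast
  then show ?thesis
    unfolding e_def .
qed

lemma exp_primitive_end_le_integral:
  assumes "0 < c"
  shows "A * exp (- c * primitive A) \<le> (LINT t:{0..A}|lborel. exp (- c * primitive t))"
proof -
  have "0 \<le> (LINT t:{0..A}|lborel. u t * exp (- c * primitive t) * t)"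
    unfolding set_lebesgue_integral_def
    by (rule integral_nonneg_AE) (auto simp: density_nonneg split: split_indicator)
  then have "0 \<le> c * (LINT t:{0..A}|lborel. u t * exp (- c * primitive t) * t)"
    using assms by simp
  then show ?thesis
    unfolding set_integral_exp_primitive_by_parts[OF assms] by simp
qed

lemma exp_primitive_in_FG:
  assumes "0 < c" and "set_borel_measurable lborel {0..A} G"
    and "\<And>x. x \<in> {0..A} \<Longrightarrow> 0 \<le> G x \<and> G x \<le> M"
  shows "((\<lambda>x. complex_of_real (exp (- c * primitive x))),
      (\<lambda>x. complex_of_real (- c * u x * exp (- c * primitive x)))) \<in> FG A G"
  by (rule of_real_pair_in_FG[where B="max 1 (c * b)"])
     (use assms has_weak_deriv_exp_primitive abs_deriv_exp_primitive_le exp_primitive_le_1 in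
       \<open>auto simp: le_max_iff_disj\<close>)

lemma Rayleigh_numerator_exp_primitive:
  assumes "0 < \<beta>" and G_measurable: "set_borel_measurable lborel {0..A} G"
    and G_density: "AE x in lborel. x \<in> {0<..<A} \<longrightarrow> G x * u x = 1"
  shows "(LINT x:{0<..<A}|lborel. x * G x * (- \<beta> * u x * exp (- \<beta> * primitive x))\<^sup>2
      + \<beta>\<^sup>2 * x / G x * (exp (- \<beta> * primitive x))\<^sup>2)
    = \<beta> * ((LINT x:{0..A}|lborel. (exp (- \<beta> * primitive x))\<^sup>2) - A * (exp (- \<beta> * primitive A))\<^sup>2)"
proof -
  define G' where "G' x = indicator {0..A} x * G x" for x
  have [measurable]: "G' \<in> borel_measurable lborel"
    using G_measurable unfolding G'_def set_borel_measurable_def by simp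
  have square: "(exp (- \<beta> * y))\<^sup>2 = exp (- (2 * \<beta>) * y)" for y
    by (simp add: power2_eq_square flip: exp_add)
  have "(LINT x:{0<..<A}|lborel. x * G x * (- \<beta> * u x * exp (- \<beta> * primitive x))\<^sup>2
        + \<beta>\<^sup>2 * x / G x * (exp (- \<beta> * primitive x))\<^sup>2)
      = (LINT x:{0<..<A}|lborel. x * G' x * (- \<beta> * u x * exp (- \<beta> * primitive x))\<^sup>2
        + \<beta>\<^sup>2 * x / G' x * (exp (- \<beta> * primitive x))\<^sup>2)"
    by (rule set_lebesgue_integral_cong) (auto simp: G'_def)
  also have "\<dots> = (LINT x:{0<..<A}|lborel. 2 * \<beta>\<^sup>2 * (u x * (exp (- \<beta> * primitive x))\<^sup>2 * x))"
  proof (rule set_lebesgue_integral_cong_AE)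
    show "AE x\<in>{0<..<A} in lborel. x * G' x * (- \<beta> * u x * exp (- \<beta> * primitive x))\<^sup>2
        + \<beta>\<^sup>2 * x / G' x * (exp (- \<beta> * primitive x))\<^sup>2
      = 2 * \<beta>\<^sup>2 * (u x * (exp (- \<beta> * primitive x))\<^sup>2 * x)"
      using G_density
      by eventually_elim (rule impI, rule Rayleigh_integrand_balanced, auto simp: G'_def)
  qed measurable
  also have "\<dots> = \<beta> * (2 * \<beta> * (LINT x:{0..A}|lborel. u x * exp (- (2 * \<beta>) * primitive x) * x))"
    unfolding square by (simp add: set_integral_mult_right set_integral_Ioo_eq_Icc power2_eq_square)
  also have "\<dots> = \<beta> * ((LINT x:{0..A}|lborel. exp (- (2 * \<beta>) * primitive x)) - A * exp (- (2 * \<beta>) * primitive A))"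
    using set_integral_exp_primitive_by_parts[of "2 * \<beta>"] assms(1) by simp
  finally show ?thesis
    by (simp only: square)
qed

lemma Rayleigh_quotient_exp_primitive_less:
  assumes "0 < \<beta>" and "0 < A" and "set_borel_measurable lborel {0..A} G"
    and "AE x in lborel. x \<in> {0<..<A} \<longrightarrow> G x * u x = 1"
  shows "0 < (LINT x:{0<..<A}|lborel. (exp (- \<beta> * primitive x))\<^sup>2)"
    and "(LINT x:{0<..<A}|lborel. x * G x * (- \<beta> * u x * exp (- \<beta> * primitive x))\<^sup>2
        + \<beta>\<^sup>2 * x / G x * (exp (- \<beta> * primitive x))\<^sup>2)
      / (LINT x:{0<..<A}|lborel. (exp (- \<beta> * primitive x))\<^sup>2) < \<beta>"
proof -
  let ?S = "LINT x:{0<..<A}|lborel. (exp (- \<beta> * primitive x))\<^sup>2"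
  have end_pos: "0 < A * (exp (- \<beta> * primitive A))\<^sup>2"
    using assms(2) by simp
  moreover have "A * (exp (- \<beta> * primitive A))\<^sup>2 \<le> ?S"
    using exp_primitive_end_le_integral[of "2 * \<beta>"] assms(1)
    by (simp add: set_integral_Ioo_eq_Icc power2_eq_square mult.assoc flip: exp_add)
  ultimately show S_pos: "0 < ?S"
    by linarith
  show "(LINT x:{0<..<A}|lborel. x * G x * (- \<beta> * u x * exp (- \<beta> * primitive x))\<^sup>2
        + \<beta>\<^sup>2 * x / G x * (exp (- \<beta> * primitive x))\<^sup>2) / ?S < \<beta>"
    unfolding Rayleigh_numerator_exp_primitive[OF assms(1,3,4)] set_integral_Ioo_eq_Icc[symmetric]
    using S_pos end_pos assms(1) by (simp add: divide_less_eq)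
qed

end

definition clipped_reciprocal :: "real \<Rightarrow> real \<Rightarrow> (real \<Rightarrow> real) \<Rightarrow> real \<Rightarrow> real" where
  "clipped_reciprocal k A G x = indicator {0..A} x / max k (indicator {0..A} x * G x)"

lemma bounded_density_clipped_reciprocal:
  assumes "0 < k" and "0 \<le> A" and "set_borel_measurable lborel {0..A} G"
  shows "bounded_density (clipped_reciprocal k A G) A (1 / k)"
proof
  have "(\<lambda>x. indicator {0..A} x * G x) \<in> borel_measurable lborel"
    using assms(3) unfolding set_borel_measurable_def by simp
  then show "clipped_reciprocal k A G \<in> borel_measurable lborel"
    unfolding clipped_reciprocal_def[abs_def] by measurable
qed (use assms in \<open>auto simp: clipped_reciprocal_def le_max_iff_disj frac_le split: split_indicator\<close>)

lemma clipped_reciprocal_inverse: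
  assumes "0 < k" and "AE x in lborel. x \<in> {0..A} \<longrightarrow> k \<le> G x"
  shows "AE x in lborel. x \<in> {0<..<A} \<longrightarrow> G x * clipped_reciprocal k A G x = 1"
  using assms(2)
proof eventually_elim
  case (elim x)
  show ?case
  proof
    assume "x \<in> {0<..<A}"
    with elim assms(1) have "0 < G x" "k \<le> G x"
      by auto
    then show "G x * clipped_reciprocal k A G x = 1"
      using \<open>x \<in> {0<..<A}\<close> by (simp add: clipped_reciprocal_def max_def)
  qed
qed

theorem mainTheorem15:
  fixes A :: real and G :: "real \<Rightarrow> real" and \<beta> :: real
  assumes "0 < A"
    and "set_borel_measurable lborel {0..A} G"
    and "\<exists>M. \<forall>x\<in>{0..A}. G x \<le> M"
    and "\<forall>x\<in>{0..A}. 0 \<le> G x"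
    and "AE x in lborel. x \<in> {0..A} \<longrightarrow> 4 * pi \<le> G x"
    and "0 < \<beta>"
  shows "kappa1 A G \<beta> < \<beta>"
proof -
  obtain M where "\<forall>x\<in>{0..A}. G x \<le> M"
    using assms(3) by blast
  then have G_bounds: "\<And>x. x \<in> {0..A} \<Longrightarrow> 0 \<le> G x \<and> G x \<le> M"
    using assms(4) by blast
  interpret bounded_density "clipped_reciprocal (4 * pi) A G" A "1 / (4 * pi)"
    by (rule bounded_density_clipped_reciprocal) (use assms(1,2) in auto)
  have "AE x in lborel. x \<in> {0<..<A} \<longrightarrow> G x * clipped_reciprocal (4 * pi) A G x = 1"
    by (rule clipped_reciprocal_inverse) (use assms(5) in auto)
  note quotient = Rayleigh_quotient_exp_primitive_less[OF assms(6,1,2) this]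
  have "kappa1 A G \<beta> \<le> (LINT x:{0<..<A}|lborel.
        x * G x * (- \<beta> * clipped_reciprocal (4 * pi) A G x * exp (- \<beta> * primitive x))\<^sup>2
      + \<beta>\<^sup>2 * x / G x * (exp (- \<beta> * primitive x))\<^sup>2)
    / (LINT x:{0<..<A}|lborel. (exp (- \<beta> * primitive x))\<^sup>2)"
    by (rule kappa1_le_Rayleigh_quotient[OF exp_primitive_in_FG[OF assms(6,2) G_bounds]])
       (use assms(4) quotient(1) in auto)
  also have "\<dots> < \<beta>"
    by (rule quotient(2))
  finally show ?thesis .
qed

end
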